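(* Let $q=p^e$ with $p$ a prime and $e\ge1$, let $r\ge2$, $m=2r$, $D=\{x\in\mathbb{F}_{q^m}:\mathrm{Tr}_{q^r/q}(x^{q^r+1})=0\}=\{d_1,\dots,d_n\}$ with $n=q^{r-1}(q^r-q+1)$, and let $\alpha$ be a generator of $\mathbb{F}_{q^m}^*$. Let $G_1$ be the $(m+1)\times n$ matrix whose first row is $(1,\dots,1)$, whose second row is $(\mathrm{Tr}_{q^m/q}(d_j))_{j}$, whose third row is $(\mathrm{Tr}_{q^m/q}(\alpha d_j)+1)_j$, and whose $(i+2)$-th row for $2\le i\le m-1$ is $(\mathrm{Tr}_{q^m/q}(\alpha^i d_j))_j$. Let $G_1'=[I_{m+1}:G_1]$. If $p\nmid r$, then the linear code generated by $G_1'$ has parameters $[n+m+1,\ m+1,\ q^{r-1}(q^r-q^{r-1}-q+1)+1]$.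
   Context: $\mathrm{Tr}_{q^k/q}$ is the trace map from $\mathbb{F}_{q^k}$ to $\mathbb{F}_q$; $I_{m+1}$ is the identity matrix of size $m+1$. *)

theory Defs
  imports Main "HOL-Computational_Algebra.Primes"
begin

definition trace :: "nat \<Rightarrow> nat \<Rightarrow> 'a::field \<Rightarrow> 'a" where
  "trace q k x = (\<Sum>i<k. x ^ (q ^ i))"

definition subfield_q :: "nat \<Rightarrow> 'a::field set" where
  "subfield_q q = {x. x ^ q = x}"

definition mult_generator :: "'a::field \<Rightarrow> bool" where
  "mult_generator \<alpha> \<longleftrightarrow> \<alpha> \<noteq> 0 \<and> (\<forall>x. x \<noteq> 0 \<longrightarrow> (\<exists>k::nat. \<alpha> ^ k = x))"

text \<open>Codewords of length N are functions nat => 'a, zero outside {..<N}.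
  Linear code over F_q generated by the k rows of the matrix G (k x N).\<close>
definition lin_code :: "nat \<Rightarrow> nat \<Rightarrow> nat \<Rightarrow> (nat \<Rightarrow> nat \<Rightarrow> 'a::field) \<Rightarrow> (nat \<Rightarrow> 'a) set" where
  "lin_code q k N G = {c. \<exists>a. (\<forall>i<k. a i \<in> subfield_q q) \<and>
       c = (\<lambda>j. if j < N then (\<Sum>i<k. a i * G i j) else 0)}"

definition hamming_wt :: "nat \<Rightarrow> (nat \<Rightarrow> 'a::zero) \<Rightarrow> nat" where
  "hamming_wt N c = card {j. j < N \<and> c j \<noteq> 0}"

definition min_dist :: "nat \<Rightarrow> (nat \<Rightarrow> 'a::zero) set \<Rightarrow> nat" where
  "min_dist N C = Min {hamming_wt N c | c. c \<in> C \<and> c \<noteq> (\<lambda>_. 0)}"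

text \<open>The (m+1) x n matrix G1 (rows 0-indexed).\<close>
definition G1 :: "nat \<Rightarrow> nat \<Rightarrow> 'a::field \<Rightarrow> (nat \<Rightarrow> 'a) \<Rightarrow> nat \<Rightarrow> nat \<Rightarrow> 'a" where
  "G1 q m \<alpha> d i j =
     (if i = 0 then 1
      else if i = 1 then trace q m (d j)
      else if i = 2 then trace q m (\<alpha> * d j) + 1
      else trace q m (\<alpha> ^ (i - 1) * d j))"

definition G1' :: "nat \<Rightarrow> nat \<Rightarrow> 'a::field \<Rightarrow> (nat \<Rightarrow> 'a) \<Rightarrow> nat \<Rightarrow> nat \<Rightarrow> 'a" where
  "G1' q m \<alpha> d i j =
     (if j < m + 1 then (if i = j then 1 else 0) else G1 q m \<alpha> d i (j - (m + 1)))"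

end

theory Submission
  imports Defs "HOL-Number_Theory.Residues" "HOL-Library.FuncSet" "HOL-Computational_Algebra.Polynomial"
begin

text \<open>
  Write Q(x) = Tr_{q^r/q}(x^(q^r+1)) on F = GF(q^(2r)), so that D is the zero set of Q. The norm
  x^(q^r+1) maps the units of F onto those of GF(q^r) with fibres of size q^r + 1, and the trace is
  balanced; hence every level set {Q = c} has (q^r + 1) q^(r-1) elements, less q^r when c = 0, which
  gives n. The codeword of a message a has weight wt(a) + n - A, where A counts the zeros of Q on
  the affine hyperplane Tr(beta x) = -(a_0 + a_2), beta = sum a_(i+1) alpha^i. As
  Q(x + mu beta^(q^r)) = Q(x) + mu Tr(beta x) + mu^2 Q(beta), every set
  {Q(x) + mu (Tr(beta x) - t) = 0} with mu in GF(q) is a translate of a level set of Q, and counting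
  the pairs (mu, x) in two ways gives q A + q^r R = q^(2r-1) + q^r, where R >= 1 is the number of
  roots of mu^2 Q(beta) + mu t in GF(q). So A <= q^(2r-2), with equality for beta = 1 and t = 0
  since Q(1) = r is nonzero when p does not divide r. If beta = 0, the independence of the powers of
  alpha over GF(q) leaves only a_0 nonzero, and the weight is n + 1.
\<close>

section \<open>Finite fields of order q^m with a primitive element\<close>

lemma diff_one_dvd_power_diff_one: "(x::nat) - 1 dvd x ^ n - 1"
proof (induction n)
  case (Suc n)
  show ?case
  proof (cases "x = 0")
    case False
    then have "x ^ Suc n - 1 = x * (x ^ n - 1) + (x - 1)"
      by (simp add: algebra_simps diff_mult_distrib2)
    then show ?thesis
      by (simp only:) (intro dvd_add dvd_mult Suc.IH dvd_refl)
  qed simp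
qed simp

locale primitive_gf =
  fixes p e q m :: nat and \<alpha> :: "'a::{field,finite}"
  assumes prime_p: "prime p" and q_eq: "q = p ^ e"
    and card_field: "card (UNIV :: 'a set) = q ^ m"
    and generator: "mult_generator \<alpha>"
begin

lemma q_power_m_gt_1: "q ^ m > 1"
proof -
  have "card {0, 1 :: 'a} \<le> card (UNIV :: 'a set)"
    by (rule card_mono) simp_all
  then show ?thesis
    by (simp add: card_field)
qed

lemma q_gt_1: "q > 1" and m_pos: "m > 0"
proof -
  have "q > 0"
    using prime_p q_eq by (simp add: prime_gt_0_nat)
  then show "q > 1" "m > 0"
    using q_power_m_gt_1 by (cases "q = 1"; cases "m = 0"; simp)+
qed

lemma CHAR_eq: "CHAR('a) = p"
proof -
  have "prime CHAR('a)"
    using prime_CHAR_semidom finite_imp_CHAR_pos[OF finite_UNIV] by blast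
  moreover have "CHAR('a) dvd p ^ (e * m)"
    using CHAR_dvd_CARD[where 'a='a] by (simp add: card_field q_eq power_mult)
  ultimately show ?thesis
    using prime_p prime_dvd_power primes_dvd_imp_eq by blast
qed

lemma frobenius_add: "(x + y) ^ (q ^ k) = x ^ (q ^ k) + (y :: 'a) ^ (q ^ k)"
  by (rule freshmans_dream') (simp_all add: CHAR_eq prime_p q_eq flip: power_mult)

lemma frobenius_sum: "(\<Sum>i\<in>A. f i) ^ (q ^ k) = (\<Sum>i\<in>A. (f i :: 'a) ^ (q ^ k))"
  by (rule freshmans_dream_sum') (simp_all add: CHAR_eq prime_p q_eq flip: power_mult)

lemma frobenius_diff: "(x - y) ^ (q ^ k) = x ^ (q ^ k) - (y :: 'a) ^ (q ^ k)"
  using frobenius_add[of "x - y" y k] by (simp add: eq_diff_eq)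

text \<open>The library's \<open>finite_field_power_card_eq_same\<close> needs the sort \<open>finite_field\<close>, which
  \<open>'a::{field,finite}\<close> does not have.\<close>
lemma power_card_minus_1_eq_1: "x \<noteq> 0 \<Longrightarrow> x ^ (q ^ m - 1) = (1 :: 'a)"
proof -
  assume "x \<noteq> 0"
  have "(\<Prod>y\<in>UNIV - {0}. x * y) = (\<Prod>y\<in>UNIV - {0}. y)"
    by (rule prod.reindex_bij_witness[of _ "\<lambda>y. y / x" "\<lambda>y. x * y"]) (use \<open>x \<noteq> 0\<close> in auto)
  moreover have "(\<Prod>y\<in>UNIV - {0}. x * y) = x ^ (q ^ m - 1) * (\<Prod>y\<in>UNIV - {0}. y)"
    by (simp add: prod.distrib card_field)
  moreover have "(\<Prod>y\<in>UNIV - {0::'a}. y) \<noteq> 0"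
    by simp
  ultimately show ?thesis
    by simp
qed

lemma power_card_eq_same: "x ^ (q ^ m) = (x :: 'a)"
proof (cases "x = 0")
  case False
  have "q ^ m = Suc (q ^ m - 1)"
    using q_power_m_gt_1 by simp
  then have "x ^ (q ^ m) = x * x ^ (q ^ m - 1)"
    by (metis power_Suc)
  also have "\<dots> = x"
    by (simp only: power_card_minus_1_eq_1[OF False] mult_1_right)
  finally show ?thesis .
qed (use q_gt_1 in simp)

lemma generator_nonzero: "\<alpha> \<noteq> 0"
  using generator by (simp add: mult_generator_def)

lemma power_generator_mod: "\<alpha> ^ j = \<alpha> ^ (j mod (q ^ m - 1))"
proof -
  have "\<alpha> ^ j = (\<alpha> ^ (q ^ m - 1)) ^ (j div (q ^ m - 1)) * \<alpha> ^ (j mod (q ^ m - 1))"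
    by (metis mod_div_mult_eq mult.commute power_add power_mult)
  also have "\<dots> = \<alpha> ^ (j mod (q ^ m - 1))"
    by (simp only: power_card_minus_1_eq_1[OF generator_nonzero] power_one mult_1_left)
  finally show ?thesis .
qed

lemma bij_betw_generator_powers: "bij_betw (\<lambda>k. \<alpha> ^ k) {..<q ^ m - 1} (UNIV - {0})"
proof -
  have onto: "(\<lambda>k. \<alpha> ^ k) ` {..<q ^ m - 1} = UNIV - {0}"
  proof (intro equalityI subsetI)
    fix x :: 'a
    assume "x \<in> UNIV - {0}"
    then obtain k where "x = \<alpha> ^ k"
      using generator by (auto simp: mult_generator_def)
    also have "\<alpha> ^ k = \<alpha> ^ (k mod (q ^ m - 1))"
      by (rule power_generator_mod)
    finally show "x \<in> (\<lambda>k. \<alpha> ^ k) ` {..<q ^ m - 1}"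
      using q_power_m_gt_1 by auto
  qed (use generator_nonzero in auto)
  moreover have "card (UNIV - {0 :: 'a}) = q ^ m - 1"
    by (simp add: card_Diff_singleton card_field)
  ultimately show ?thesis
    by (simp add: bij_betw_def eq_card_imp_inj_on)
qed

lemma power_generator_eq_1_iff: "\<alpha> ^ j = 1 \<longleftrightarrow> q ^ m - 1 dvd j"
proof
  assume "\<alpha> ^ j = 1"
  then have "\<alpha> ^ (j mod (q ^ m - 1)) = \<alpha> ^ 0"
    using power_generator_mod[of j] by simp
  moreover have "j mod (q ^ m - 1) < q ^ m - 1" "0 < q ^ m - 1"
    using q_power_m_gt_1 by simp_all
  ultimately have "j mod (q ^ m - 1) = 0"
    using bij_betw_generator_powers unfolding bij_betw_def by (blast dest: inj_onD)
  then show "q ^ m - 1 dvd j"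
    by auto
next
  assume "q ^ m - 1 dvd j"
  then obtain t where "j = (q ^ m - 1) * t" ..
  then show "\<alpha> ^ j = 1"
    by (simp only: power_mult power_card_minus_1_eq_1[OF generator_nonzero] power_one)
qed

lemma card_roots_of_unity:
  assumes "s dvd q ^ m - 1"
  shows "card {x :: 'a. x ^ s = 1} = s"
proof -
  obtain M where M: "q ^ m - 1 = s * M"
    using assms by blast
  have "s > 0" "M > 0"
    using M q_power_m_gt_1 by (auto intro!: gr0I)
  have roots: "{x :: 'a. x ^ s = 1} = (\<lambda>t. \<alpha> ^ (M * t)) ` {..<s}"
  proof (intro equalityI subsetI)
    fix x :: 'a
    assume "x \<in> {x. x ^ s = 1}"
    then have "x ^ s = 1" "x \<noteq> 0"
      using \<open>s > 0\<close> by (auto simp: power_0_left)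
    then obtain k where k: "k < q ^ m - 1" "x = \<alpha> ^ k"
      using bij_betw_generator_powers by (auto simp: bij_betw_def)
    then have "s * M dvd k * s"
      using \<open>x ^ s = 1\<close> M power_generator_eq_1_iff[of "k * s"] by (simp add: power_mult)
    then have "M dvd k"
      using \<open>s > 0\<close> by (simp add: mult.commute)
    then obtain t where "k = M * t" ..
    then show "x \<in> (\<lambda>t. \<alpha> ^ (M * t)) ` {..<s}"
      using k M \<open>M > 0\<close> by auto
  next
    fix x
    assume "x \<in> (\<lambda>t. \<alpha> ^ (M * t)) ` {..<s}"
    then show "x \<in> {x. x ^ s = 1}"
      using M power_generator_eq_1_iff by (auto simp flip: power_mult simp: mult.commute)
  qed
  have "inj_on (\<lambda>t. \<alpha> ^ (M * t)) {..<s}"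
  proof (rule inj_onI)
    fix t u
    assume "t \<in> {..<s}" "u \<in> {..<s}" "\<alpha> ^ (M * t) = \<alpha> ^ (M * u)"
    moreover from this have "M * t \<in> {..<q ^ m - 1}" "M * u \<in> {..<q ^ m - 1}"
      using M \<open>M > 0\<close> by (auto simp: mult.commute)
    ultimately have "M * t = M * u"
      using bij_betw_generator_powers unfolding bij_betw_def by (blast dest: inj_onD)
    then show "t = u"
      using \<open>M > 0\<close> by simp
  qed
  then show ?thesis
    by (simp add: roots card_image)
qed

definition fixed_field :: "nat \<Rightarrow> 'a set" where
  "fixed_field k = {x. x ^ (q ^ k) = x}"

lemma fixed_field_add [intro]: "x \<in> fixed_field k \<Longrightarrow> y \<in> fixed_field k \<Longrightarrow> x + y \<in> fixed_field k"
  and fixed_field_diff [intro]: "x \<in> fixed_field k \<Longrightarrow> y \<in> fixed_field k \<Longrightarrow> x - y \<in> fixed_field k"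
  and fixed_field_mult [intro]: "x \<in> fixed_field k \<Longrightarrow> y \<in> fixed_field k \<Longrightarrow> x * y \<in> fixed_field k"
  and fixed_field_divide [intro]: "x \<in> fixed_field k \<Longrightarrow> y \<in> fixed_field k \<Longrightarrow> x / y \<in> fixed_field k"
  by (simp_all add: fixed_field_def frobenius_add frobenius_diff power_mult_distrib power_divide)

lemma fixed_field_0 [simp]: "0 \<in> fixed_field k" and fixed_field_1 [simp]: "1 \<in> fixed_field k"
  using q_gt_1 by (simp_all add: fixed_field_def)

lemma fixed_field_uminus [intro]: "x \<in> fixed_field k \<Longrightarrow> - x \<in> fixed_field k"
  using fixed_field_diff[where x = 0 and y = x] by simp

lemma fixed_field_m [simp]: "fixed_field m = UNIV"
  by (simp add: fixed_field_def power_card_eq_same)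

lemma subfield_q_eq: "subfield_q q = fixed_field 1"
  by (simp add: subfield_q_def fixed_field_def)

lemma subfield_q_power: "c \<in> subfield_q q \<Longrightarrow> c ^ (q ^ k) = c"
proof (induction k)
  case (Suc k)
  then show ?case
    by (simp add: subfield_q_def power_mult mult.commute[of q])
qed simp

lemma subfield_q_subset: "subfield_q q \<subseteq> fixed_field k"
  by (auto simp: fixed_field_def subfield_q_power)

lemma fixed_field_eq: "fixed_field k = insert 0 {x. x ^ (q ^ k - 1) = 1}"
proof -
  have "q ^ k = Suc (q ^ k - 1)"
    using q_gt_1 by simp
  then have "x ^ (q ^ k) = x * x ^ (q ^ k - 1)" for x :: 'a
    by (metis power_Suc)
  then show ?thesis
    by (auto simp: fixed_field_def)
qed

lemma card_fixed_field:
  assumes "k > 0" "k dvd m"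
  shows "card (fixed_field k) = q ^ k"
proof -
  have "q ^ k > 1"
    using one_less_power[OF q_gt_1 assms(1)] .
  have "q ^ k - 1 dvd q ^ m - 1"
    using assms(2) diff_one_dvd_power_diff_one[of "q ^ k"] by (auto simp: power_mult)
  then have "card {x :: 'a. x ^ (q ^ k - 1) = 1} = q ^ k - 1"
    by (rule card_roots_of_unity)
  moreover have "(0 :: 'a) \<notin> {x. x ^ (q ^ k - 1) = 1}"
    using \<open>q ^ k > 1\<close> by (simp add: power_0_left)
  ultimately show ?thesis
    using \<open>q ^ k > 1\<close> by (simp add: fixed_field_eq)
qed

lemma card_subfield_q: "card (subfield_q q :: 'a set) = q"
  using card_fixed_field[of 1] by (simp add: subfield_q_eq)

lemma trace_add: "trace q k (x + y) = trace q k x + trace q k (y :: 'a)"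
  and trace_diff: "trace q k (x - y) = trace q k x - trace q k (y :: 'a)"
  by (simp_all add: trace_def frobenius_add frobenius_diff sum.distrib sum_subtractf)

lemma trace_sum: "trace q k (\<Sum>i\<in>A. f i) = (\<Sum>i\<in>A. trace q k (f i :: 'a))"
  by (simp add: trace_def frobenius_sum sum.swap[of _ A])

lemma trace_smult: "c \<in> subfield_q q \<Longrightarrow> trace q k (c * x) = c * trace q k (x :: 'a)"
  by (simp add: trace_def power_mult_distrib subfield_q_power sum_distrib_left)

lemma trace_0 [simp]: "trace q k (0 :: 'a) = 0"
  using q_gt_1 by (auto simp: trace_def zero_power intro!: sum.neutral)

lemma trace_in_subfield_q:
  assumes "x \<in> fixed_field k"
  shows "trace q k x \<in> subfield_q q"
proof -
  have "(trace q k x) ^ q = (\<Sum>i<k. x ^ (q ^ Suc i))"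
    using frobenius_sum[of "\<lambda>i. x ^ (q ^ i)" "{..<k}" 1]
    by (simp add: trace_def mult.commute[of q] flip: power_mult)
  also have "\<dots> = (\<Sum>i<k. x ^ (q ^ i))"
    using assms sum.lessThan_Suc_shift[of "\<lambda>i. x ^ (q ^ i)" k]
    by (simp add: fixed_field_def add.commute)
  finally show ?thesis
    by (simp add: subfield_q_def trace_def)
qed

lemma trace_not_zero_on_fixed_field:
  assumes "k > 0" "k dvd m"
  obtains y where "y \<in> fixed_field k" "trace q k y \<noteq> 0"
proof -
  define P :: "'a poly" where "P = (\<Sum>i<k. monom 1 (q ^ i))"
  have poly_P: "poly P x = trace q k x" for x
    by (simp add: P_def trace_def poly_sum poly_monom)
  have "coeff P (q ^ (k - 1)) = 1"
    using assms(1) q_gt_1 by (simp add: P_def coeff_sum)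
  then have "P \<noteq> 0"
    by auto
  have "degree P \<le> q ^ (k - 1)"
    unfolding P_def using q_gt_1
    by (intro degree_sum_le) (auto simp: degree_monom_eq intro: power_increasing)
  moreover have "q ^ (k - 1) < q ^ k"
    using q_gt_1 assms(1) by simp
  ultimately have "card {x. poly P x = 0} < card (fixed_field k)"
    using card_poly_roots_bound[OF \<open>P \<noteq> 0\<close>] card_fixed_field[OF assms] by simp
  then have "\<not> fixed_field k \<subseteq> {x. poly P x = 0}"
    by (auto dest: card_mono[rotated])
  then show ?thesis
    using that poly_P by auto
qed

lemma card_trace_fibre:
  assumes "k > 0" "k dvd m" "c \<in> subfield_q q"
  shows "card {x \<in> fixed_field k. trace q k x = c} = q ^ (k - 1)"
proof -
  let ?F = "\<lambda>c. {x \<in> fixed_field k. trace q k x = c}"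
  obtain y where y: "y \<in> fixed_field k" "trace q k y \<noteq> 0"
    using trace_not_zero_on_fixed_field assms(1,2) by blast
  have card_F: "card (?F c) = card (?F 0)" if "c \<in> subfield_q q" for c
  proof -
    define u where "u = c / trace q k y * y"
    have c_y: "c / trace q k y \<in> subfield_q q"
      using that trace_in_subfield_q[OF y(1)] by (auto simp: subfield_q_eq)
    then have "u \<in> fixed_field k"
      unfolding u_def using y(1) subfield_q_subset by blast
    moreover have "trace q k u = c"
      unfolding u_def using y(2) by (simp only: trace_smult[OF c_y]) simp
    ultimately have "bij_betw (\<lambda>x. x + u) (?F 0) (?F c)"
      by (intro bij_betw_byWitness[where f' = "\<lambda>x. x - u"]) (auto simp: trace_add trace_diff)
    then show ?thesis
      by (simp add: bij_betw_same_card)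
  qed
  have "fixed_field k = (\<Union>c\<in>subfield_q q. ?F c)"
    using trace_in_subfield_q by auto
  then have "q ^ k = card (\<Union>c\<in>subfield_q q. ?F c)"
    using card_fixed_field[OF assms(1,2)] by simp
  also have "\<dots> = (\<Sum>c\<in>subfield_q q. card (?F c))"
    by (rule card_UN_disjoint) auto
  also have "\<dots> = q * card (?F 0)"
    using card_F card_subfield_q by simp
  finally have "card (?F 0) = q ^ (k - 1)"
    using q_gt_1 assms(1) by (cases k) auto
  then show ?thesis
    using card_F[OF assms(3)] by simp
qed

lemma card_trace_hyperplane:
  assumes "\<beta> \<noteq> (0 :: 'a)" "t \<in> subfield_q q"
  shows "card {x. trace q m (\<beta> * x) = t} = q ^ (m - 1)"
proof -
  have "bij_betw (\<lambda>x. \<beta> * x) {x. trace q m (\<beta> * x) = t} {y \<in> fixed_field m. trace q m y = t}"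
    by (rule bij_betw_byWitness[where f' = "\<lambda>y. y / \<beta>"]) (use assms(1) in auto)
  then show ?thesis
    using card_trace_fibre[OF m_pos dvd_refl assms(2)] by (simp add: bij_betw_same_card)
qed

lemma inj_on_generator_frobenius: "inj_on (\<lambda>j. \<alpha> ^ (q ^ j)) {..<m}"
proof (rule linorder_inj_onI')
  fix j k
  assume "j \<in> {..<m}" "k \<in> {..<m}" "j < k"
  then have "q ^ j < q ^ k" "q ^ k < q ^ m"
    using q_gt_1 by simp_all
  moreover have "1 \<le> q ^ j"
    using q_gt_1 by simp
  ultimately have "0 < q ^ k - q ^ j" "q ^ k - q ^ j < q ^ m - 1"
    by linarith+
  then have "\<alpha> ^ (q ^ k - q ^ j) \<noteq> 1"
    by (auto simp: power_generator_eq_1_iff dest: dvd_imp_le)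
  moreover have "\<alpha> ^ (q ^ k) = \<alpha> ^ (q ^ j) * \<alpha> ^ (q ^ k - q ^ j)"
    using \<open>q ^ j < q ^ k\<close> by (simp flip: power_add)
  ultimately show "\<alpha> ^ (q ^ j) \<noteq> \<alpha> ^ (q ^ k)"
    using generator_nonzero by auto
qed

lemma generator_powers_independent:
  assumes "\<forall>i<m. b i \<in> subfield_q q" and "(\<Sum>i<m. b i * \<alpha> ^ i) = 0"
  shows "\<forall>i<m. b i = 0"
proof (rule ccontr)
  assume "\<not> (\<forall>i<m. b i = 0)"
  define P :: "'a poly" where "P = (\<Sum>i<m. monom (b i) i)"
  have coeff_P: "coeff P i = (if i < m then b i else 0)" for i
    by (simp add: P_def coeff_sum)
  then have "P \<noteq> 0"
    using \<open>\<not> (\<forall>i<m. b i = 0)\<close> by (metis coeff_0)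
  have "degree P < m"
    using m_pos coeff_P by (intro degree_lessI) auto
  have "poly P (\<alpha> ^ (q ^ j)) = (\<Sum>i<m. b i * \<alpha> ^ i) ^ (q ^ j)" for j
    using assms(1)
    by (simp add: P_def poly_sum poly_monom frobenius_sum power_mult_distrib subfield_q_power
        mult.commute flip: power_mult)
  then have "(\<lambda>j. \<alpha> ^ (q ^ j)) ` {..<m} \<subseteq> {x. poly P x = 0}"
    using assms(2) q_gt_1 by (auto simp: zero_power)
  from card_mono[OF _ this] have "m \<le> card {x. poly P x = 0}"
    using inj_on_generator_frobenius by (simp add: card_image)
  also have "\<dots> \<le> degree P"
    by (rule card_poly_roots_bound[OF \<open>P \<noteq> 0\<close>])
  finally show False
    using \<open>degree P < m\<close> by simp
qed

lemma sum_card_pencil_zeros: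
  fixes f g :: "'b::finite \<Rightarrow> 'a"
  assumes "\<And>x. f x \<in> subfield_q q" and "\<And>x. g x \<in> subfield_q q"
  shows "(\<Sum>\<mu>\<in>subfield_q q. card {x. f x + \<mu> * g x = 0})
    = q * card {x. f x = 0 \<and> g x = 0} + card {x. g x \<noteq> 0}"
proof -
  have roots: "card {\<mu> \<in> subfield_q q. f x + \<mu> * g x = 0}
      = q * of_bool (f x = 0 \<and> g x = 0) + of_bool (g x \<noteq> 0)" for x
  proof (cases "g x = 0")
    case False
    have "- f x / g x \<in> subfield_q q"
      using assms by (auto simp: subfield_q_eq)
    then have "{\<mu> \<in> subfield_q q. f x + \<mu> * g x = 0} = {- f x / g x}"
      using False by (auto simp: field_simps add_eq_0_iff)
    then show ?thesis
      using False by simp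
  qed (simp add: card_subfield_q)
  have "(\<Sum>\<mu>\<in>subfield_q q. card {x. f x + \<mu> * g x = 0})
      = (\<Sum>\<mu>\<in>subfield_q q. \<Sum>x\<in>UNIV. of_bool (f x + \<mu> * g x = 0))"
    by simp
  also have "\<dots> = (\<Sum>x\<in>UNIV. \<Sum>\<mu>\<in>subfield_q q. of_bool (f x + \<mu> * g x = 0))"
    by (rule sum.swap)
  also have "\<dots> = (\<Sum>x\<in>UNIV. q * of_bool (f x = 0 \<and> g x = 0) + of_bool (g x \<noteq> 0))"
    using roots by (simp add: Int_def)
  also have "\<dots> = q * card {x. f x = 0 \<and> g x = 0} + card {x. g x \<noteq> 0}"
    by (simp add: sum.distrib flip: sum_distrib_left)
  finally show ?thesis .
qed

end

section \<open>The quadratic form Tr(x^(q^r+1)) on GF(q^(2r))\<close>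

lemma card_translate: "card {x. P (x + w)} = card {x :: 'a::ab_group_add. P x}"
  by (rule bij_betw_same_card[of "\<lambda>x. x + w"]) (rule bij_betw_byWitness[where f' = "\<lambda>x. x - w"]; auto)

locale quadratic_extension = primitive_gf p e q "2 * r" \<alpha>
  for p e q r :: nat and \<alpha> :: "'a::{field,finite}"
begin

definition rel_norm :: "'a \<Rightarrow> 'a" where
  "rel_norm x = x ^ (q ^ r + 1)"

definition quad_form :: "'a \<Rightarrow> 'a" where
  "quad_form x = trace q r (rel_norm x)"

lemma r_pos: "r > 0"
  using m_pos by simp

lemma q_times_power_pred: "q * q ^ (r - 1) = q ^ r"
  using r_pos by (cases r) simp_all

lemma q_power_2r: "q ^ (2 * r) = q ^ r * q ^ r"
  by (simp only: mult_2 power_add)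

lemma q_power_2r_minus_1: "q ^ (2 * r) - 1 = (q ^ r - 1) * (q ^ r + 1)"
  unfolding q_power_2r by (simp add: algebra_simps diff_mult_distrib)

lemma frobenius_r_involution: "(x ^ (q ^ r)) ^ (q ^ r) = (x :: 'a)"
  using power_card_eq_same[of x] unfolding q_power_2r by (simp only: power_mult)

lemma rel_norm_eq: "rel_norm x = x ^ (q ^ r) * x"
  by (simp add: rel_norm_def)

lemma rel_norm_in_fixed_field: "rel_norm x \<in> fixed_field r"
  by (simp add: fixed_field_def rel_norm_eq power_mult_distrib frobenius_r_involution mult.commute)

lemma rel_norm_mult: "rel_norm (x * y) = rel_norm x * rel_norm y"
  by (simp add: rel_norm_def power_mult_distrib)

lemma rel_norm_eq_0_iff [simp]: "rel_norm x = 0 \<longleftrightarrow> x = 0"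
  using q_gt_1 by (simp add: rel_norm_def)

lemma rel_norm_surj:
  assumes "b \<in> fixed_field r" "b \<noteq> 0"
  obtains x where "rel_norm x = b"
proof -
  obtain k where b: "b = \<alpha> ^ k"
    using generator assms(2) by (auto simp: mult_generator_def)
  have "b ^ (q ^ r - 1) = 1"
    using assms by (simp add: fixed_field_eq)
  then have "\<alpha> ^ (k * (q ^ r - 1)) = 1"
    by (simp add: b power_mult)
  then have "(q ^ r - 1) * (q ^ r + 1) dvd k * (q ^ r - 1)"
    unfolding power_generator_eq_1_iff q_power_2r_minus_1 .
  moreover have "q ^ r - 1 \<noteq> 0"
    using one_less_power[OF q_gt_1 r_pos] by simp
  ultimately have "q ^ r + 1 dvd k"
    by (metis mult.commute nat_mult_dvd_cancel_disj)
  then obtain j where "k = (q ^ r + 1) * j" ..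
  then have "rel_norm (\<alpha> ^ j) = b"
    unfolding rel_norm_def b by (metis power_mult mult.commute)
  then show ?thesis
    by (rule that)
qed

lemma card_rel_norm_fibre:
  assumes "b \<in> fixed_field r" "b \<noteq> 0"
  shows "card {x. rel_norm x = b} = q ^ r + 1"
proof -
  obtain x0 where x0: "rel_norm x0 = b"
    using rel_norm_surj assms by blast
  then have "x0 \<noteq> 0"
    using assms(2) by auto
  have "{x. rel_norm x = b} = (\<lambda>z. x0 * z) ` {z. rel_norm z = 1}"
  proof (intro equalityI subsetI)
    fix x
    assume "x \<in> {x. rel_norm x = b}"
    then have "rel_norm (x / x0) = 1" "x = x0 * (x / x0)"
      using x0 \<open>x0 \<noteq> 0\<close> assms(2) by (simp_all add: rel_norm_def power_divide)
    then show "x \<in> (\<lambda>z. x0 * z) ` {z. rel_norm z = 1}"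
      by blast
  qed (auto simp: rel_norm_mult x0)
  also have "card \<dots> = card {z. rel_norm z = 1}"
    using \<open>x0 \<noteq> 0\<close> by (intro card_image inj_onI) auto
  also have "\<dots> = q ^ r + 1"
    unfolding rel_norm_def by (rule card_roots_of_unity) (simp only: q_power_2r_minus_1 dvd_triv_right)
  finally show ?thesis .
qed

lemma quad_form_in_subfield_q: "quad_form x \<in> subfield_q q"
  unfolding quad_form_def by (rule trace_in_subfield_q[OF rel_norm_in_fixed_field])

lemma quad_form_0 [simp]: "quad_form 0 = 0"
  by (simp add: quad_form_def rel_norm_def)

lemma card_quad_form_level:
  assumes "c \<in> subfield_q q"
  shows "card {x. quad_form x = c} + (if c = 0 then q ^ r else 0) = (q ^ r + 1) * q ^ (r - 1)"
proof -
  let ?B = "{b \<in> fixed_field r. b \<noteq> 0 \<and> trace q r b = c}"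
  have "{b \<in> fixed_field r. trace q r b = c} = ?B \<union> (if c = 0 then {0} else {})"
    by auto
  then have card_B: "card ?B + (if c = 0 then 1 else 0) = q ^ (r - 1)"
    using card_trace_fibre[OF r_pos _ assms] by (simp split: if_splits)
  have "{x. x \<noteq> 0 \<and> quad_form x = c} = (\<Union>b\<in>?B. {x. rel_norm x = b})"
    using rel_norm_in_fixed_field by (auto simp: quad_form_def)
  then have "card {x. x \<noteq> 0 \<and> quad_form x = c} = (\<Sum>b\<in>?B. card {x. rel_norm x = b})"
    by (simp only:) (rule card_UN_disjoint; auto)
  also have "\<dots> = (q ^ r + 1) * card ?B"
    by (simp add: card_rel_norm_fibre)
  finally have card_nonzero: "card {x. x \<noteq> 0 \<and> quad_form x = c} = (q ^ r + 1) * card ?B" .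
  show ?thesis
  proof (cases "c = 0")
    case True
    then have "{x. quad_form x = c} = insert 0 {x. x \<noteq> 0 \<and> quad_form x = c}"
      by auto
    then show ?thesis
      using card_nonzero card_B[symmetric] True by (simp add: algebra_simps)
  next
    case False
    then have "{x. quad_form x = c} = {x. x \<noteq> 0 \<and> quad_form x = c}"
      by auto
    then show ?thesis
      using card_nonzero card_B[symmetric] False by simp
  qed
qed

lemma trace_double: "trace q (2 * r) z = trace q r (z + z ^ (q ^ r) :: 'a)"
proof -
  have split: "(\<Sum>i<a + b. f i) = (\<Sum>i<a. f i) + (\<Sum>i<b. f (a + i))" for a b and f :: "nat \<Rightarrow> 'a"
    by (induction b) (simp_all add: add.assoc)
  show ?thesis
    using split[of "\<lambda>i. z ^ (q ^ i)" r r]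
    by (simp add: trace_def frobenius_add sum.distrib mult_2 power_add flip: power_mult)
qed

lemma quad_form_shift:
  assumes "\<mu> \<in> subfield_q q"
  shows "quad_form (x + \<mu> * \<beta> ^ (q ^ r))
    = quad_form x + \<mu> * trace q (2 * r) (\<beta> * x) + \<mu>\<^sup>2 * quad_form \<beta>"
proof -
  have "(\<mu> * \<beta> ^ (q ^ r)) ^ (q ^ r) = \<mu> * \<beta>"
    by (simp add: power_mult_distrib subfield_q_power[OF assms] frobenius_r_involution)
  then have "rel_norm (x + \<mu> * \<beta> ^ (q ^ r))
      = rel_norm x + \<mu> * (\<beta> * x + (\<beta> * x) ^ (q ^ r)) + \<mu>\<^sup>2 * rel_norm \<beta>"
    by (simp add: rel_norm_eq frobenius_add algebra_simps power2_eq_square)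
  moreover have "\<mu>\<^sup>2 \<in> subfield_q q"
    using assms by (auto simp: subfield_q_eq power2_eq_square)
  ultimately show ?thesis
    by (simp add: quad_form_def trace_add trace_smult assms trace_double)
qed

lemma card_quad_pencil_eq_card_level:
  assumes "\<mu> \<in> subfield_q q"
  shows "card {x. quad_form x + \<mu> * (trace q (2 * r) (\<beta> * x) - t) = 0}
    = card {y. quad_form y = \<mu>\<^sup>2 * quad_form \<beta> + \<mu> * t}"
proof -
  have "quad_form x + \<mu> * (trace q (2 * r) (\<beta> * x) - t) = 0
      \<longleftrightarrow> quad_form (x + \<mu> * \<beta> ^ (q ^ r)) = \<mu>\<^sup>2 * quad_form \<beta> + \<mu> * t" for x
    by (auto simp: quad_form_shift[OF assms] algebra_simps)
  then show ?thesis
    using card_translate[of "\<lambda>y. quad_form y = \<mu>\<^sup>2 * quad_form \<beta> + \<mu> * t"] by simp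
qed

lemma sum_card_quad_pencil:
  assumes "t \<in> subfield_q q"
  shows "(\<Sum>\<mu>\<in>subfield_q q. card {x. quad_form x + \<mu> * (trace q (2 * r) (\<beta> * x) - t) = 0})
      + q ^ r * card {\<mu> \<in> subfield_q q. \<mu>\<^sup>2 * quad_form \<beta> + \<mu> * t = 0}
    = q ^ (2 * r) + q ^ r"
proof -
  define level where "level \<mu> = \<mu>\<^sup>2 * quad_form \<beta> + \<mu> * t" for \<mu>
  have level_in: "level \<mu> \<in> subfield_q q" if "\<mu> \<in> subfield_q q" for \<mu>
    using that assms quad_form_in_subfield_q[of \<beta>]
    by (auto simp: level_def subfield_q_eq power2_eq_square)
  have "(\<Sum>\<mu>\<in>subfield_q q. card {x. quad_form x + \<mu> * (trace q (2 * r) (\<beta> * x) - t) = 0})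
      + q ^ r * card {\<mu> \<in> subfield_q q. level \<mu> = 0}
    = (\<Sum>\<mu>\<in>subfield_q q. card {y. quad_form y = level \<mu>} + (if level \<mu> = 0 then q ^ r else 0))"
    by (simp add: card_quad_pencil_eq_card_level level_def sum.distrib sum.If_cases Int_def)
  also have "\<dots> = q * ((q ^ r + 1) * q ^ (r - 1))"
    using card_quad_form_level[OF level_in] card_subfield_q by simp
  also have "\<dots> = (q ^ r + 1) * (q * q ^ (r - 1))"
    by (simp only: mult_ac)
  also have "\<dots> = q ^ (2 * r) + q ^ r"
    unfolding q_times_power_pred q_power_2r by (simp add: algebra_simps)
  finally show ?thesis
    by (simp add: level_def)
qed

lemma card_quad_zeros_on_hyperplane:
  assumes "\<beta> \<noteq> 0" "t \<in> subfield_q q"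
  shows "q * card {x. quad_form x = 0 \<and> trace q (2 * r) (\<beta> * x) = t}
      + q ^ r * card {\<mu> \<in> subfield_q q. \<mu>\<^sup>2 * quad_form \<beta> + \<mu> * t = 0}
    = q ^ (2 * r - 1) + q ^ r"
proof -
  define L where "L x = trace q (2 * r) (\<beta> * x) - t" for x
  have "L x \<in> subfield_q q" for x
    using trace_in_subfield_q[of "\<beta> * x" "2 * r"] assms(2) by (auto simp: L_def subfield_q_eq)
  then have "(\<Sum>\<mu>\<in>subfield_q q. card {x. quad_form x + \<mu> * L x = 0})
      = q * card {x. quad_form x = 0 \<and> L x = 0} + card {x. L x \<noteq> 0}"
    by (rule sum_card_pencil_zeros[OF quad_form_in_subfield_q])
  moreover have "{x. L x \<noteq> 0} = UNIV - {x. trace q (2 * r) (\<beta> * x) = t}"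
    by (auto simp: L_def)
  then have "card {x. L x \<noteq> 0} + q ^ (2 * r - 1) = q ^ (2 * r)"
    using card_trace_hyperplane[OF assms] card_field power_increasing[of "2 * r - 1" "2 * r" q] q_gt_1
    by (simp add: card_Diff_subset)
  ultimately show ?thesis
    using sum_card_quad_pencil[OF assms(2), of \<beta>] by (simp add: L_def)
qed

lemma card_quad_zeros_on_hyperplane_le:
  assumes "\<beta> \<noteq> 0" "t \<in> subfield_q q"
  shows "card {x. quad_form x = 0 \<and> trace q (2 * r) (\<beta> * x) = t} \<le> q ^ (2 * r - 2)"
proof -
  have "0 \<in> {\<mu> \<in> subfield_q q. \<mu>\<^sup>2 * quad_form \<beta> + \<mu> * t = 0}"
    by (simp add: subfield_q_eq)
  then have "1 \<le> card {\<mu> \<in> subfield_q q. \<mu>\<^sup>2 * quad_form \<beta> + \<mu> * t = 0}"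
    by (auto simp: Suc_le_eq card_gt_0_iff)
  then have "q ^ r * 1 \<le> q ^ r * card {\<mu> \<in> subfield_q q. \<mu>\<^sup>2 * quad_form \<beta> + \<mu> * t = 0}"
    by (rule mult_le_mono2)
  then have "q * card {x. quad_form x = 0 \<and> trace q (2 * r) (\<beta> * x) = t} \<le> q ^ (2 * r - 1)"
    using card_quad_zeros_on_hyperplane[OF assms] by linarith
  also have "q ^ (2 * r - 1) = q * q ^ (2 * r - 2)"
    using r_pos by (cases r) simp_all
  finally show ?thesis
    using q_gt_1 by simp
qed

lemma quad_form_1: "quad_form 1 = of_nat r"
  by (simp add: quad_form_def rel_norm_def trace_def)

lemma card_quad_zeros_on_trace_kernel:
  assumes "\<not> p dvd r"
  shows "card {x. quad_form x = 0 \<and> trace q (2 * r) x = 0} = q ^ (2 * r - 2)"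
proof -
  have "quad_form 1 \<noteq> 0"
    using assms by (simp add: quad_form_1 of_nat_eq_0_iff_char_dvd CHAR_eq)
  then have "{\<mu> \<in> subfield_q q. \<mu>\<^sup>2 * quad_form 1 + \<mu> * 0 = 0} = {0}"
    by (auto simp: subfield_q_eq)
  then have "q * card {x. quad_form x = 0 \<and> trace q (2 * r) x = 0} = q ^ (2 * r - 1)"
    using card_quad_zeros_on_hyperplane[of 1 0] by (simp add: subfield_q_eq)
  also have "\<dots> = q * q ^ (2 * r - 2)"
    using r_pos by (cases r) simp_all
  finally show ?thesis
    using q_gt_1 by simp
qed

lemma card_quad_zeros: "card {x. quad_form x = 0} = q ^ (r - 1) * (q ^ r - q + 1)"
proof -
  define X where "X = q ^ (r - 1)"
  have q_X: "q ^ r = q * X"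
    by (simp only: X_def q_times_power_pred)
  have "q \<le> q * X"
    using q_gt_1 by (simp add: X_def)
  have "card {x. quad_form x = 0} + q * X = (q * X + 1) * X"
    using card_quad_form_level[of 0] by (simp add: q_X X_def subfield_q_eq)
  then have "card {x. quad_form x = 0} = (q * X + 1) * X - q * X"
    by (metis add_diff_cancel_right')
  also have "\<dots> = X * (q * X + 1 - q)"
    by (metis diff_mult_distrib2 mult.commute)
  also have "q * X + 1 - q = q * X - q + 1"
    using \<open>q \<le> q * X\<close> by linarith
  finally show ?thesis
    unfolding q_X X_def .
qed

text \<open>For \<open>r = 1\<close> the truncated subtraction on the right gives \<open>1\<close>, not \<open>0\<close>.\<close>
lemma card_quad_zeros_minus_square:
  assumes "r \<ge> 2"
  shows "card {x. quad_form x = 0} - q ^ (2 * r - 2) = q ^ (r - 1) * (q ^ r - q ^ (r - 1) - q + 1)"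
proof -
  define X where "X = q ^ (r - 1)"
  have q_X: "q ^ r = q * X"
    by (simp only: X_def q_times_power_pred)
  have "2 * r - 2 = (r - 1) + (r - 1)"
    using assms by simp
  then have X_X: "q ^ (2 * r - 2) = X * X"
    by (simp only: X_def power_add)
  have "q \<le> X"
    using assms q_gt_1 power_increasing[of 1 "r - 1" q] by (simp add: X_def)
  then have "X + q \<le> q * X"
    using q_gt_1 mult_le_mono1[of 2 q X] by linarith
  then have "q * X - q + 1 - X = q * X - X - q + 1"
    by linarith
  then have "X * (q * X - q + 1) - X * X = X * (q * X - X - q + 1)"
    by (metis diff_mult_distrib2)
  then show ?thesis
    unfolding card_quad_zeros X_X q_X X_def[symmetric] .
qed

end

section \<open>Systematic linear codes\<close>

definition systematic_matrix :: "nat \<Rightarrow> (nat \<Rightarrow> nat \<Rightarrow> 'a::zero_neq_one) \<Rightarrow> nat \<Rightarrow> nat \<Rightarrow> 'a" where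
  "systematic_matrix k G i j = (if j < k then (if i = j then 1 else 0) else G i (j - k))"

lemma G1'_eq_systematic_matrix: "G1' q m \<alpha> d = systematic_matrix (m + 1) (G1 q m \<alpha> d)"
  by (simp add: fun_eq_iff G1'_def systematic_matrix_def)

definition codeword :: "nat \<Rightarrow> nat \<Rightarrow> (nat \<Rightarrow> nat \<Rightarrow> 'a::field) \<Rightarrow> (nat \<Rightarrow> 'a) \<Rightarrow> nat \<Rightarrow> 'a" where
  "codeword k N G a = (\<lambda>j. if j < N then (\<Sum>i<k. a i * G i j) else 0)"

lemma lin_code_eq_image: "lin_code q k N G = codeword k N G ` {a. \<forall>i<k. a i \<in> subfield_q q}"
  by (auto simp: lin_code_def codeword_def)

lemma codeword_systematic_prefix:
  "j < k \<Longrightarrow> codeword k (k + N) (systematic_matrix k G) a j = a j"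
  by (simp add: codeword_def systematic_matrix_def if_distrib[of "(*) _"] cong: if_cong)

lemma codeword_systematic_suffix:
  "j < N \<Longrightarrow> codeword k (k + N) (systematic_matrix k G) a (k + j) = (\<Sum>i<k. a i * G i j)"
  by (simp add: codeword_def systematic_matrix_def)

lemma codeword_systematic_eq_0_iff:
  "codeword k (k + N) (systematic_matrix k G) a = (\<lambda>_. 0) \<longleftrightarrow> (\<forall>i<k. a i = 0)"
proof
  assume "\<forall>i<k. a i = 0"
  then show "codeword k (k + N) (systematic_matrix k G) a = (\<lambda>_. 0)"
    by (simp add: codeword_def fun_eq_iff)
next
  assume zero: "codeword k (k + N) (systematic_matrix k G) a = (\<lambda>_. 0)"
  show "\<forall>i<k. a i = 0"
    using codeword_systematic_prefix[of _ k N G a] by (simp add: zero)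
qed

lemma hamming_wt_codeword_systematic:
  "hamming_wt (k + N) (codeword k (k + N) (systematic_matrix k G) a)
    = card {i. i < k \<and> a i \<noteq> 0} + hamming_wt N (\<lambda>j. \<Sum>i<k. a i * G i j)"
proof -
  let ?c = "codeword k (k + N) (systematic_matrix k G) a"
  let ?J = "{j. j < N \<and> (\<Sum>i<k. a i * G i j) \<noteq> 0}"
  have "{j. j < k + N \<and> ?c j \<noteq> 0} = {i. i < k \<and> a i \<noteq> 0} \<union> (\<lambda>j. k + j) ` ?J"
  proof (intro equalityI subsetI)
    fix j
    assume j: "j \<in> {j. j < k + N \<and> ?c j \<noteq> 0}"
    show "j \<in> {i. i < k \<and> a i \<noteq> 0} \<union> (\<lambda>j. k + j) ` ?J"
    proof (cases "j < k")
      case False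
      then have "j = k + (j - k)" "j - k < N"
        using j by auto
      then have "j - k \<in> ?J"
        using j codeword_systematic_suffix[of "j - k" N k G a] by auto
      then show ?thesis
        using \<open>j = k + (j - k)\<close> by blast
    qed (use j codeword_systematic_prefix[of j k N G a] in auto)
  qed (auto simp: codeword_systematic_prefix codeword_systematic_suffix)
  moreover have "card ({i. i < k \<and> a i \<noteq> 0} \<union> (\<lambda>j. k + j) ` ?J)
      = card {i. i < k \<and> a i \<noteq> 0} + card ((\<lambda>j. k + j) ` ?J)"
    by (rule card_Un_disjoint) auto
  moreover have "card ((\<lambda>j. k + j) ` ?J) = card ?J"
    by (simp add: card_image)
  ultimately show ?thesis
    by (simp add: hamming_wt_def)
qed

lemma card_lin_code_systematic:
  assumes "finite (subfield_q q :: 'a::field set)"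
  shows "card (lin_code q k (k + N) (systematic_matrix k G :: nat \<Rightarrow> nat \<Rightarrow> 'a))
    = card (subfield_q q :: 'a set) ^ k"
proof -
  let ?cw = "codeword k (k + N) (systematic_matrix k G :: nat \<Rightarrow> nat \<Rightarrow> 'a)"
  let ?M = "PiE {..<k} (\<lambda>_. subfield_q q :: 'a set)"
  have "inj_on ?cw ?M"
  proof (rule inj_onI)
    fix a b
    assume "a \<in> ?M" "b \<in> ?M" and eq: "?cw a = ?cw b"
    show "a = b"
    proof (rule PiE_ext[OF \<open>a \<in> ?M\<close> \<open>b \<in> ?M\<close>])
      fix i
      assume "i \<in> {..<k}"
      then show "a i = b i"
        using fun_cong[OF eq, of i] by (simp add: codeword_systematic_prefix)
    qed
  qed
  moreover have "?cw ` ?M = lin_code q k (k + N) (systematic_matrix k G)"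
    unfolding lin_code_eq_image
  proof (intro equalityI subsetI)
    fix c
    assume "c \<in> ?cw ` {a. \<forall>i<k. a i \<in> subfield_q q}"
    then obtain a where a: "\<forall>i<k. a i \<in> subfield_q q" "c = ?cw a"
      by blast
    moreover have "?cw (restrict a {..<k}) = ?cw a"
      by (auto simp: codeword_def intro!: sum.cong)
    ultimately show "c \<in> ?cw ` ?M"
      by (metis (no_types, lifting) image_eqI lessThan_iff restrict_PiE_iff)
  qed (auto simp: PiE_iff)
  ultimately have "card (lin_code q k (k + N) (systematic_matrix k G)) = card ?M"
    by (metis card_image)
  then show ?thesis
    using assms by (simp add: card_PiE)
qed

lemma hamming_wt_le: "hamming_wt N c \<le> N"
proof -
  have "card {j. j < N \<and> c j \<noteq> 0} \<le> card {..<N}"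
    by (rule card_mono) auto
  then show ?thesis
    by (simp add: hamming_wt_def)
qed

lemma min_dist_eqI:
  assumes "c \<in> C" "c \<noteq> (\<lambda>_. 0)" "hamming_wt N c = w"
    and "\<And>c. c \<in> C \<Longrightarrow> c \<noteq> (\<lambda>_. 0) \<Longrightarrow> w \<le> hamming_wt N c"
  shows "min_dist N C = w"
proof -
  let ?W = "{hamming_wt N c | c. c \<in> C \<and> c \<noteq> (\<lambda>_. 0)}"
  have "?W \<subseteq> {..N}"
    using hamming_wt_le by blast
  then have "finite ?W"
    by (rule finite_subset) simp
  moreover have "w \<in> ?W"
    using assms(1-3) by blast
  ultimately show ?thesis
    unfolding min_dist_def using assms(4) by (intro Min_eqI) blast+
qed

lemma min_dist_systematic_eqI:
  fixes G :: "nat \<Rightarrow> nat \<Rightarrow> 'a::field"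
  assumes "\<forall>i<k. a i \<in> subfield_q q" "\<exists>i<k. a i \<noteq> 0"
    and "card {i. i < k \<and> a i \<noteq> 0} + hamming_wt N (\<lambda>j. \<Sum>i<k. a i * G i j) = w"
    and "\<And>b. \<forall>i<k. b i \<in> subfield_q q \<Longrightarrow> \<exists>i<k. b i \<noteq> 0 \<Longrightarrow>
      w \<le> card {i. i < k \<and> b i \<noteq> 0} + hamming_wt N (\<lambda>j. \<Sum>i<k. b i * G i j)"
  shows "min_dist (k + N) (lin_code q k (k + N) (systematic_matrix k G)) = w"
proof (rule min_dist_eqI)
  let ?cw = "codeword k (k + N) (systematic_matrix k G)"
  show "?cw a \<in> lin_code q k (k + N) (systematic_matrix k G)"
    unfolding lin_code_eq_image using assms(1) by blast
  show "?cw a \<noteq> (\<lambda>_. 0)"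
    using assms(2) by (simp add: codeword_systematic_eq_0_iff)
  show "hamming_wt (k + N) (?cw a) = w"
    using assms(3) by (simp add: hamming_wt_codeword_systematic)
  fix c
  assume "c \<in> lin_code q k (k + N) (systematic_matrix k G)" "c \<noteq> (\<lambda>_. 0)"
  then obtain b where "\<forall>i<k. b i \<in> subfield_q q" "c = ?cw b" "\<exists>i<k. b i \<noteq> 0"
    unfolding lin_code_eq_image by (auto simp: codeword_systematic_eq_0_iff)
  then show "w \<le> hamming_wt (k + N) c"
    using assms(4) by (simp add: hamming_wt_codeword_systematic)
qed

lemma hamming_wt_reindex:
  assumes "bij_betw d {..<n} D"
  shows "hamming_wt n (\<lambda>j. f (d j)) = card {x \<in> D. f x \<noteq> 0}"
proof -
  have img: "d ` {..<n} = D" and inj: "inj_on d {..<n}"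
    using bij_betw_imp_surj_on[OF assms] bij_betw_imp_inj_on[OF assms] .
  have "{x \<in> D. f x \<noteq> 0} = d ` {j. j < n \<and> f (d j) \<noteq> 0}"
    unfolding img[symmetric] by auto
  also have "card \<dots> = card {j. j < n \<and> f (d j) \<noteq> 0}"
    by (rule card_image, rule inj_on_subset[OF inj]) auto
  finally show ?thesis
    by (simp add: hamming_wt_def)
qed

section \<open>The code generated by [I : G1]\<close>

context primitive_gf
begin

definition generator_comb :: "(nat \<Rightarrow> 'a) \<Rightarrow> 'a" where
  "generator_comb a = (\<Sum>i<m. a (Suc i) * \<alpha> ^ i)"

lemma G1_rows_combination:
  assumes "m \<ge> 2" "\<forall>i<m + 1. a i \<in> subfield_q q"
  shows "(\<Sum>i<m + 1. a i * G1 q m \<alpha> d i j) = a 0 + a 2 + trace q m (generator_comb a * d j)"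
proof -
  have row: "G1 q m \<alpha> d (Suc i) j = trace q m (\<alpha> ^ i * d j) + (if i = 1 then 1 else 0)" for i
    by (cases "i = 0"; cases "i = 1") (simp_all add: G1_def)
  have "G1 q m \<alpha> d 0 j = 1"
    by (simp add: G1_def)
  then have "(\<Sum>i<m + 1. a i * G1 q m \<alpha> d i j) = a 0 + (\<Sum>i<m. a (Suc i) * G1 q m \<alpha> d (Suc i) j)"
    unfolding Suc_eq_plus1[symmetric] sum.lessThan_Suc_shift by simp
  also have "(\<Sum>i<m. a (Suc i) * G1 q m \<alpha> d (Suc i) j)
      = (\<Sum>i<m. trace q m (a (Suc i) * \<alpha> ^ i * d j) + (if i = 1 then a (Suc i) else 0))"
  proof (rule sum.cong[OF refl])
    fix i
    assume "i \<in> {..<m}"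
    then have "a (Suc i) \<in> subfield_q q"
      using assms(2) by simp
    then show "a (Suc i) * G1 q m \<alpha> d (Suc i) j
        = trace q m (a (Suc i) * \<alpha> ^ i * d j) + (if i = 1 then a (Suc i) else 0)"
      by (simp add: row distrib_left trace_smult mult.assoc)
  qed
  also have "\<dots> = trace q m (generator_comb a * d j) + a 2"
    using assms(1)
    by (simp add: sum.distrib generator_comb_def trace_sum sum_distrib_right numeral_2_eq_2)
  finally show ?thesis
    by (simp add: ac_simps)
qed

lemma card_G1'_code: "card (lin_code q (m + 1) (n + m + 1) (G1' q m \<alpha> d)) = q ^ (m + 1)"
  using card_lin_code_systematic[of q "m + 1" n "G1 q m \<alpha> d"]
  by (simp add: G1'_eq_systematic_matrix card_subfield_q ac_simps)

end

context quadratic_extension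
begin

lemma hamming_wt_G1_message:
  assumes "bij_betw d {..<n} D" "D = {x. quad_form x = 0}" "\<forall>i<2 * r + 1. a i \<in> subfield_q q"
  shows "hamming_wt n (\<lambda>j. \<Sum>i<2 * r + 1. a i * G1 q (2 * r) \<alpha> d i j)
    = n - card {x. quad_form x = 0 \<and> trace q (2 * r) (generator_comb a * x) = - (a 0 + a 2)}"
proof -
  let ?f = "\<lambda>x. a 0 + a 2 + trace q (2 * r) (generator_comb a * x)"
  have "2 * r \<ge> 2"
    using r_pos by simp
  then have "hamming_wt n (\<lambda>j. \<Sum>i<2 * r + 1. a i * G1 q (2 * r) \<alpha> d i j) = hamming_wt n (\<lambda>j. ?f (d j))"
    using G1_rows_combination[OF _ assms(3)] by simp
  also have "\<dots> = card {x \<in> D. ?f x \<noteq> 0}"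
    by (rule hamming_wt_reindex[OF assms(1)])
  also have "{x \<in> D. ?f x \<noteq> 0} = D - {x \<in> D. ?f x = 0}"
    by blast
  also have "card \<dots> = n - card {x \<in> D. ?f x = 0}"
    using bij_betw_same_card[OF assms(1)] by (simp add: card_Diff_subset)
  also have "{x \<in> D. ?f x = 0} = {x. quad_form x = 0 \<and> trace q (2 * r) (generator_comb a * x) = - (a 0 + a 2)}"
    using assms(2) unfolding add_eq_0_iff by blast
  finally show ?thesis .
qed

lemma weight_G1_message_ge:
  assumes "bij_betw d {..<n} D" "D = {x. quad_form x = 0}"
    and b: "\<forall>i<2 * r + 1. b i \<in> subfield_q q" "\<exists>i<2 * r + 1. b i \<noteq> 0"
  shows "n - q ^ (2 * r - 2) + 1
    \<le> card {i. i < 2 * r + 1 \<and> b i \<noteq> 0} + hamming_wt n (\<lambda>j. \<Sum>i<2 * r + 1. b i * G1 q (2 * r) \<alpha> d i j)"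
proof -
  let ?A = "card {x. quad_form x = 0 \<and> trace q (2 * r) (generator_comb b * x) = - (b 0 + b 2)}"
  have "{i. i < 2 * r + 1 \<and> b i \<noteq> 0} \<noteq> {}"
    using b(2) by blast
  then have support: "1 \<le> card {i. i < 2 * r + 1 \<and> b i \<noteq> 0}"
    by (simp add: Suc_le_eq card_gt_0_iff)
  have "?A \<le> q ^ (2 * r - 2)"
  proof (cases "generator_comb b = 0")
    case True
    have "\<forall>i<2 * r. b (Suc i) \<in> subfield_q q"
      using b(1) by simp
    then have zero: "\<forall>i<2 * r. b (Suc i) = 0"
      using True unfolding generator_comb_def by (rule generator_powers_independent)
    obtain i where "i < 2 * r + 1" "b i \<noteq> 0"
      using b(2) by blast
    then have "b 0 \<noteq> 0"
      using zero by (cases i) auto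
    moreover have "b 2 = 0"
      using r_pos zero[rule_format, of 1] by (simp add: numeral_2_eq_2)
    ultimately show ?thesis
      using True by simp
  next
    case False
    have "b 0 \<in> subfield_q q" "b 2 \<in> subfield_q q"
      using b(1) r_pos by simp_all
    then have "- (b 0 + b 2) \<in> subfield_q q"
      unfolding subfield_q_eq by (intro fixed_field_uminus fixed_field_add)
    with False show ?thesis
      by (rule card_quad_zeros_on_hyperplane_le)
  qed
  then have "n - q ^ (2 * r - 2) \<le> n - ?A"
    by (rule diff_le_mono2)
  with support show ?thesis
    unfolding hamming_wt_G1_message[OF assms(1,2) b(1)] by linarith
qed

lemma weight_G1_unit_message:
  assumes "bij_betw d {..<n} D" "D = {x. quad_form x = 0}" "\<not> p dvd r"
  defines "a \<equiv> \<lambda>i. if i = 1 then 1 else (0 :: 'a)"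
  shows "card {i. i < 2 * r + 1 \<and> a i \<noteq> 0} + hamming_wt n (\<lambda>j. \<Sum>i<2 * r + 1. a i * G1 q (2 * r) \<alpha> d i j)
    = n - q ^ (2 * r - 2) + 1"
proof -
  have "generator_comb a = (\<Sum>i<2 * r. if i = 0 then 1 else 0)"
    unfolding generator_comb_def by (rule sum.cong) (auto simp: a_def)
  then have comb: "generator_comb a = 1"
    using r_pos by simp
  have sum_a: "a 0 + a 2 = 0"
    by (simp add: a_def)
  have "\<forall>i<2 * r + 1. a i \<in> subfield_q q"
    by (simp add: a_def subfield_q_eq)
  then have "hamming_wt n (\<lambda>j. \<Sum>i<2 * r + 1. a i * G1 q (2 * r) \<alpha> d i j)
      = n - card {x. quad_form x = 0 \<and> trace q (2 * r) (generator_comb a * x) = - (a 0 + a 2)}"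
    by (rule hamming_wt_G1_message[OF assms(1,2)])
  also have "\<dots> = n - q ^ (2 * r - 2)"
    using card_quad_zeros_on_trace_kernel[OF assms(3)] by (simp add: comb sum_a)
  finally show ?thesis
    using r_pos by (simp add: a_def)
qed

lemma min_dist_G1'_code:
  assumes "bij_betw d {..<n} D" "D = {x. quad_form x = 0}" "\<not> p dvd r"
  shows "min_dist (n + 2 * r + 1) (lin_code q (2 * r + 1) (n + 2 * r + 1) (G1' q (2 * r) \<alpha> d))
    = n - q ^ (2 * r - 2) + 1"
proof -
  have "min_dist ((2 * r + 1) + n) (lin_code q (2 * r + 1) ((2 * r + 1) + n)
      (systematic_matrix (2 * r + 1) (G1 q (2 * r) \<alpha> d))) = n - q ^ (2 * r - 2) + 1"
  proof (rule min_dist_systematic_eqI)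
    show "\<forall>i<2 * r + 1. (if i = 1 then 1 else 0 :: 'a) \<in> subfield_q q"
      by (simp add: subfield_q_eq)
    show "\<exists>i<2 * r + 1. (if i = 1 then 1 else 0) \<noteq> (0 :: 'a)"
      using r_pos by (intro exI[of _ 1]) simp
  qed (use weight_G1_unit_message[OF assms] weight_G1_message_ge[OF assms(1,2)] in auto)
  then show ?thesis
    by (simp add: G1'_eq_systematic_matrix ac_simps)
qed

end

theorem corollary3p12:
  fixes p e q r m :: nat and \<alpha> :: "'a::{field,finite}" and D :: "'a set"
    and d :: "nat \<Rightarrow> 'a" and n :: nat
  assumes "prime p" and "e \<ge> 1" and "q = p ^ e" and "r \<ge> 2" and "m = 2 * r"
    and "card (UNIV :: 'a set) = q ^ m"
    and "D = {x. trace q r (x ^ (q ^ r + 1)) = 0}"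
    and "n = card D"
    and "bij_betw d {..<n} D"
    and "mult_generator \<alpha>"
    and "\<not> p dvd r"
  shows "n = q ^ (r - 1) * (q ^ r - q + 1)
    \<and> card (lin_code q (m + 1) (n + m + 1) (G1' q m \<alpha> d)) = q ^ (m + 1)
    \<and> min_dist (n + m + 1) (lin_code q (m + 1) (n + m + 1) (G1' q m \<alpha> d))
        = q ^ (r - 1) * (q ^ r - q ^ (r - 1) - q + 1) + 1"
proof -
  interpret quadratic_extension p e q r \<alpha>
    using assms by unfold_locales simp_all
  have D: "D = {x. quad_form x = 0}"
    using assms(7) by (simp add: quad_form_def rel_norm_def)
  have n: "n = card {x. quad_form x = 0}"
    using assms(8) D by simp
  have "n = q ^ (r - 1) * (q ^ r - q + 1)"
    using n card_quad_zeros by simp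
  moreover have "card (lin_code q (m + 1) (n + m + 1) (G1' q m \<alpha> d)) = q ^ (m + 1)"
    unfolding assms(5) by (rule card_G1'_code)
  moreover have "min_dist (n + m + 1) (lin_code q (m + 1) (n + m + 1) (G1' q m \<alpha> d))
      = n - q ^ (2 * r - 2) + 1"
    unfolding assms(5) by (rule min_dist_G1'_code[OF assms(9) D assms(11)])
  moreover have "n - q ^ (2 * r - 2) = q ^ (r - 1) * (q ^ r - q ^ (r - 1) - q + 1)"
    unfolding n by (rule card_quad_zeros_minus_square[OF assms(4)])
  ultimately show ?thesis
    by simp
qed

end
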